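(* Let $G$ be a transitive permutation group on a finite set $\Omega$, let $N$ be a normal subgroup of $G$ such that the set $\Omega/N=\{\omega^N:\omega\in\Omega\}$ of $N$-orbits has at least $2$ elements, and let $G\circlearrowright\Omega/N$ denote the permutation group induced by the natural action of $G$ on $\Omega/N$. Then \[ \mathbf{m}(G)\ge\mathbf{m}(G\circlearrowright\Omega/N). \]
   Context: For a transitive permutation group $X$ on a finite set $\Sigma$ with $|\Sigma|\ge2$, a subset $A\subseteq\Sigma$ is self-separable for $X$ if there exists $x\in X$ with $A\cap A^x=\emptyset$; $\mathbf{m}(X)$ is the minimum cardinality of a subset of $\Sigma$ that is not self-separable for $X$. *)

theory Defs
  imports Main
begin

definition perm_inv :: "'a set \<Rightarrow> ('a \<Rightarrow> 'a) \<Rightarrow> ('a \<Rightarrow> 'a)" where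
  "perm_inv \<Omega> g = (\<lambda>x. if x \<in> \<Omega> then inv_into \<Omega> g x else x)"

definition is_perm_on :: "'a set \<Rightarrow> ('a \<Rightarrow> 'a) \<Rightarrow> bool" where
  "is_perm_on \<Omega> g \<longleftrightarrow> bij_betw g \<Omega> \<Omega> \<and> (\<forall>x. x \<notin> \<Omega> \<longrightarrow> g x = x)"

definition perm_group :: "'a set \<Rightarrow> ('a \<Rightarrow> 'a) set \<Rightarrow> bool" where
  "perm_group \<Omega> G \<longleftrightarrow> (\<forall>g\<in>G. is_perm_on \<Omega> g) \<and> id \<in> G \<and>
     (\<forall>g\<in>G. \<forall>h\<in>G. g \<circ> h \<in> G) \<and> (\<forall>g\<in>G. perm_inv \<Omega> g \<in> G)"

definition transitive_on :: "'a set \<Rightarrow> ('a \<Rightarrow> 'a) set \<Rightarrow> bool" where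
  "transitive_on \<Omega> G \<longleftrightarrow> (\<forall>x\<in>\<Omega>. \<forall>y\<in>\<Omega>. \<exists>g\<in>G. g x = y)"

definition normal_perm_subgroup :: "'a set \<Rightarrow> ('a \<Rightarrow> 'a) set \<Rightarrow> ('a \<Rightarrow> 'a) set \<Rightarrow> bool" where
  "normal_perm_subgroup \<Omega> N G \<longleftrightarrow> perm_group \<Omega> N \<and> N \<subseteq> G \<and>
     (\<forall>g\<in>G. \<forall>n\<in>N. g \<circ> n \<circ> perm_inv \<Omega> g \<in> N)"

definition orbit :: "('a \<Rightarrow> 'a) set \<Rightarrow> 'a \<Rightarrow> 'a set" where
  "orbit N \<omega> = {n \<omega> | n. n \<in> N}"

definition orbits :: "'a set \<Rightarrow> ('a \<Rightarrow> 'a) set \<Rightarrow> 'a set set" where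
  "orbits \<Omega> N = orbit N ` \<Omega>"

definition induced_perm :: "'a set \<Rightarrow> ('a \<Rightarrow> 'a) set \<Rightarrow> ('a \<Rightarrow> 'a) \<Rightarrow> ('a set \<Rightarrow> 'a set)" where
  "induced_perm \<Omega> N g = (\<lambda>B. if B \<in> orbits \<Omega> N then g ` B else B)"

definition induced_group :: "'a set \<Rightarrow> ('a \<Rightarrow> 'a) set \<Rightarrow> ('a \<Rightarrow> 'a) set \<Rightarrow> ('a set \<Rightarrow> 'a set) set" where
  "induced_group \<Omega> N G = induced_perm \<Omega> N ` G"

definition self_separable :: "('b \<Rightarrow> 'b) set \<Rightarrow> 'b set \<Rightarrow> bool" where
  "self_separable X A \<longleftrightarrow> (\<exists>x\<in>X. A \<inter> x ` A = {})"

definition mval :: "'b set \<Rightarrow> ('b \<Rightarrow> 'b) set \<Rightarrow> nat" where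
  "mval \<Sigma> X = (LEAST k. \<exists>A. A \<subseteq> \<Sigma> \<and> card A = k \<and> \<not> self_separable X A)"

end

theory Submission
  imports Defs
begin

text \<open>A set A of points that no element of G moves off itself projects onto the set of N-orbits
of its points, which has at most card A elements, and no induced permutation moves that set of
orbits off itself either, because g maps the orbit of a to the orbit of g a. Minimality of
m(G) then gives the inequality.\<close>

lemma perm_inv_apply_left: "is_perm_on \<Omega> g \<Longrightarrow> x \<in> \<Omega> \<Longrightarrow> perm_inv \<Omega> g (g x) = x"
  unfolding is_perm_on_def perm_inv_def
  by (auto simp: bij_betw_inv_into_left bij_betw_apply)

lemma perm_inv_apply_right: "is_perm_on \<Omega> g \<Longrightarrow> x \<in> \<Omega> \<Longrightarrow> g (perm_inv \<Omega> g x) = x"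
  unfolding is_perm_on_def perm_inv_def
  by (auto simp: bij_betw_inv_into_right)

lemma is_perm_on_image_eq: "is_perm_on \<Omega> g \<Longrightarrow> g ` \<Omega> = \<Omega>"
  unfolding is_perm_on_def by (simp add: bij_betw_def)

lemma orbit_subset:
  assumes "perm_group \<Omega> N" and "x \<in> \<Omega>"
  shows "orbit N x \<subseteq> \<Omega>"
  using assms is_perm_on_image_eq unfolding perm_group_def orbit_def by blast

lemma image_orbit_subset:
  assumes G: "perm_group \<Omega> G" and N: "normal_perm_subgroup \<Omega> N G"
    and g: "g \<in> G" and x: "x \<in> \<Omega>"
  shows "g ` orbit N x \<subseteq> orbit N (g x)"
proof
  fix y assume "y \<in> g ` orbit N x"
  then obtain n where n: "n \<in> N" and y: "y = g (n x)" unfolding orbit_def by auto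
  have "g \<circ> n \<circ> perm_inv \<Omega> g \<in> N"
    using N g n unfolding normal_perm_subgroup_def by blast
  moreover have "is_perm_on \<Omega> g" using G g unfolding perm_group_def by blast
  then have "(g \<circ> n \<circ> perm_inv \<Omega> g) (g x) = y" using x y by (simp add: perm_inv_apply_left)
  ultimately show "y \<in> orbit N (g x)" unfolding orbit_def by blast
qed

lemma image_orbit:
  assumes G: "perm_group \<Omega> G" and N: "normal_perm_subgroup \<Omega> N G"
    and g: "g \<in> G" and x: "x \<in> \<Omega>"
  shows "g ` orbit N x = orbit N (g x)"
proof
  show "g ` orbit N x \<subseteq> orbit N (g x)" using image_orbit_subset[OF G N g x] .
next
  have perm_g: "is_perm_on \<Omega> g" and inv_g: "perm_inv \<Omega> g \<in> G"
    using G g unfolding perm_group_def by auto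
  have gx: "g x \<in> \<Omega>" using is_perm_on_image_eq[OF perm_g] x by blast
  have "perm_group \<Omega> N" using N unfolding normal_perm_subgroup_def by blast
  then have orbit_gx: "orbit N (g x) \<subseteq> \<Omega>" using gx by (rule orbit_subset)
  have inv_g_orbit: "perm_inv \<Omega> g ` orbit N (g x) \<subseteq> orbit N x"
    using image_orbit_subset[OF G N inv_g gx] perm_inv_apply_left[OF perm_g x] by simp
  show "orbit N (g x) \<subseteq> g ` orbit N x"
  proof
    fix y assume y: "y \<in> orbit N (g x)"
    then have "perm_inv \<Omega> g y \<in> orbit N x" using inv_g_orbit by blast
    moreover have "g (perm_inv \<Omega> g y) = y"
      using y orbit_gx by (blast intro: perm_inv_apply_right[OF perm_g])
    ultimately show "y \<in> g ` orbit N x" by (metis imageI)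
  qed
qed

lemma induced_perm_orbit:
  assumes "perm_group \<Omega> G" and "normal_perm_subgroup \<Omega> N G"
    and "g \<in> G" and "x \<in> \<Omega>"
  shows "induced_perm \<Omega> N g (orbit N x) = orbit N (g x)"
  using image_orbit[OF assms] \<open>x \<in> \<Omega>\<close> unfolding induced_perm_def orbits_def by auto

lemma not_self_separable_orbit_image:
  assumes G: "perm_group \<Omega> G" and N: "normal_perm_subgroup \<Omega> N G"
    and A: "A \<subseteq> \<Omega>" "\<not> self_separable G A"
  shows "\<not> self_separable (induced_group \<Omega> N G) (orbit N ` A)"
proof
  assume "self_separable (induced_group \<Omega> N G) (orbit N ` A)"
  then obtain g where g: "g \<in> G"
    and disjoint: "orbit N ` A \<inter> induced_perm \<Omega> N g ` orbit N ` A = {}"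
    unfolding self_separable_def induced_group_def by auto
  from A(2) g obtain a where a: "a \<in> A" "g a \<in> A"
    unfolding self_separable_def by blast
  have "induced_perm \<Omega> N g (orbit N a) = orbit N (g a)"
    using induced_perm_orbit[OF G N g] a A(1) by blast
  then show False using disjoint a by blast
qed

lemma not_self_separable_carrier:
  assumes "perm_group \<Omega> G" and "\<Omega> \<noteq> {}"
  shows "\<not> self_separable G \<Omega>"
proof
  assume "self_separable G \<Omega>"
  then obtain g where "g \<in> G" and "\<Omega> \<inter> g ` \<Omega> = {}"
    unfolding self_separable_def by blast
  moreover have "is_perm_on \<Omega> g" using assms(1) \<open>g \<in> G\<close> unfolding perm_group_def by blast
  ultimately show False using assms(2) is_perm_on_image_eq by fastforce
qed

lemma mval_le:
  assumes "A \<subseteq> \<Sigma>" and "\<not> self_separable X A"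
  shows "mval \<Sigma> X \<le> card A"
  unfolding mval_def using assms by (intro Least_le) blast

lemma mval_attained:
  assumes "A \<subseteq> \<Sigma>" and "\<not> self_separable X A"
  obtains B where "B \<subseteq> \<Sigma>" "card B = mval \<Sigma> X" "\<not> self_separable X B"
proof -
  have "\<exists>k B. B \<subseteq> \<Sigma> \<and> card B = k \<and> \<not> self_separable X B" using assms by blast
  then have "\<exists>B. B \<subseteq> \<Sigma> \<and> card B = mval \<Sigma> X \<and> \<not> self_separable X B"
    unfolding mval_def by (rule LeastI_ex)
  then show thesis using that by blast
qed

theorem lemma3p2:
  fixes \<Omega> :: "'a set" and G N :: "('a \<Rightarrow> 'a) set"
  assumes "finite \<Omega>"
    and "perm_group \<Omega> G"
    and "transitive_on \<Omega> G"
    and "normal_perm_subgroup \<Omega> N G"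
    and "card (orbits \<Omega> N) \<ge> 2"
  shows "mval \<Omega> G \<ge> mval (orbits \<Omega> N) (induced_group \<Omega> N G)"
proof -
  have "\<Omega> \<noteq> {}" using assms(5) unfolding orbits_def by auto
  then obtain A where A: "A \<subseteq> \<Omega>" "card A = mval \<Omega> G" "\<not> self_separable G A"
    using mval_attained not_self_separable_carrier[OF assms(2)] by blast
  have "orbit N ` A \<subseteq> orbits \<Omega> N" using A(1) unfolding orbits_def by auto
  then have "mval (orbits \<Omega> N) (induced_group \<Omega> N G) \<le> card (orbit N ` A)"
    using mval_le not_self_separable_orbit_image[OF assms(2,4) A(1,3)] by blast
  also have "\<dots> \<le> card A"
    using A(1) assms(1) by (meson card_image_le finite_subset)
  finally show ?thesis using A(2) by simp
qed

end
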